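(* Let $F$ be a safe sentence and let $\mathbf c$ be a nonempty finite set of object constants containing every object constant occurring in $F$. Then the equivalence $\mathrm{Ground}_{\mathbf c}[F]\leftrightarrow F$ is derivable from $\mathit{SPP}_{\mathbf c}$ in $\mathbf{INT}^=+\mathrm{DE}$.
   Context: Formulas are first-order formulas over a signature with object constants, predicate constants and equality, but no function constants of arity $>0$. The primitive connectives are $\bot,\land,\lor,\rightarrow$ and the quantifiers $\forall,\exists$; $\neg F$ abbreviates $F\rightarrow\bot$, $\top$ abbreviates $\bot\rightarrow\bot$, $F\leftrightarrow G$ abbreviates $(F\rightarrow G)\land(G\rightarrow F)$. A sentence is a formula without free variables. Restricted variables: for quantifier-free $G$, $\mathrm{RV}(G)$ is: $\emptyset$ if $G$ is an equality between two variables; the set of variables of $G$ if $G$ is any other atomic formula; $\mathrm{RV}(\bot)=\emptyset$; $\mathrm{RV}(G\land H)=\mathrm{RV}(G)\cup\mathrm{RV}(H)$; $\mathrm{RV}(G\lor H)=\mathrm{RV}(G)\cap\mathrm{RV}(H)$; $\mathrm{RV}(G\rightarrow H)=\emptyset$. An occurrence of a subformula or variable in a formula is positive if the number of implications containing it in their antecedent is even, negative otherwise, and strictly positive if it is in the antecedent of no implication. A prenex sentence $Q_1x_1\cdots Q_nx_nM$ ($M$ quantifier-free, $x_i$ distinct) is semi-safe if every strictly positive occurrence of every $x_i$ in $M$ belongs to a subformula $G\rightarrow H$ with $x_i\in\mathrm{RV}(G)$. Simplification transformations: $\neg\bot\mapsto\top$, $\neg\top\mapsto\bot$; $\bot\land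 G\mapsto\bot$, $G\land\bot\mapsto\bot$, $\top\land G\mapsto G$, $G\land\top\mapsto G$; $\bot\lor G\mapsto G$, $G\lor\bot\mapsto G$, $\top\lor G\mapsto\top$, $G\lor\top\mapsto\top$; $\bot\rightarrow G\mapsto\top$, $G\rightarrow\top\mapsto\top$, $\top\rightarrow G\mapsto G$. A variable $x$ is positively (resp. negatively) weakly restricted in a quantifier-free formula $G$ if the formula obtained from $G$ by first replacing every atomic formula $A$ of $G$ with $x\in\mathrm{RV}(A)$ by $\bot$ and then applying the simplification transformations is $\top$ (resp. $\bot$). A semi-safe prenex sentence $Q_1x_1\cdots Q_nx_nM$ is safe if for every occurrence of every variable $x_i$: (a) if $Q_i=\forall$, the occurrence belongs to a positive subformula (of the sentence) in which $x_i$ is positively weakly restricted, or to a negative subformula in which $x_i$ is negatively weakly restricted; (b) if $Q_i=\exists$, the occurrence belongs to a negative subformula in which $x_i$ is positively weakly restricted, or to a positive subformula in which $x_i$ is negatively weakly restricted. For a finite set $\mathbf c$ of object constants, $\mathit{in}_{\mathbf c}(x_1,\dots,x_m)$ is $\bigwedge_{1\le j\le m}\bigvee_{c\in\mathbf c}x_j=c$, and $\mathit{SPP}_{\mathbf c}$ is the conjunction of $\forall\mathbf x(p_i(\mathbf x)\rightarrow\mathit{in}_{\mathbf c}(\mathbf x))$ over all predicate constants $p_i$ occurring in $F$. For a prenex sentence $F$ and nonempty finite $\mathbf c$, $\mathrm{Ground}_{\mathbf c}[F]$ is: $F$ if $F$ is quantifier-free; $\mathrm{Ground}_{\mathbf c}[\forall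 xG(x)]=\bigwedge_{c\in\mathbf c}\mathrm{Ground}_{\mathbf c}[G(c)]$; $\mathrm{Ground}_{\mathbf c}[\exists xG(x)]=\bigvee_{c\in\mathbf c}\mathrm{Ground}_{\mathbf c}[G(c)]$. $\mathbf{INT}^=$ is intuitionistic predicate logic with equality, and $\mathrm{DE}$ is the decidable equality axiom $x=y\lor x\neq y$. *)

theory Defs
  imports Main
begin

text \<open>Object constants have type 'c, predicate constants type 'p; variables are
  natural numbers.  A predicate constant is identified with a pair (name, arity).\<close>

datatype 'c trm = Var nat | Cst 'c

datatype ('c, 'p) form =
    FBot
  | Atom 'p "'c trm list"
  | Eq "'c trm" "'c trm"
  | And "('c, 'p) form" "('c, 'p) form"
  | Or  "('c, 'p) form" "('c, 'p) form"
  | Imp "('c, 'p) form" "('c, 'p) form"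
  | All nat "('c, 'p) form"
  | Ex  nat "('c, 'p) form"

abbreviation FTop :: "('c, 'p) form" where "FTop \<equiv> Imp FBot FBot"
abbreviation Neg :: "('c, 'p) form \<Rightarrow> ('c, 'p) form" where "Neg A \<equiv> Imp A FBot"
abbreviation Iff :: "('c, 'p) form \<Rightarrow> ('c, 'p) form \<Rightarrow> ('c, 'p) form" where
  "Iff A B \<equiv> And (Imp A B) (Imp B A)"

fun vars_trm :: "'c trm \<Rightarrow> nat set" where
  "vars_trm (Var x) = {x}"
| "vars_trm (Cst c) = {}"

fun consts_trm :: "'c trm \<Rightarrow> 'c set" where
  "consts_trm (Var x) = {}"
| "consts_trm (Cst c) = {c}"

fun fv :: "('c, 'p) form \<Rightarrow> nat set" where
  "fv FBot = {}"
| "fv (Atom p ts) = (\<Union>t\<in>set ts. vars_trm t)"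
| "fv (Eq s t) = vars_trm s \<union> vars_trm t"
| "fv (And A B) = fv A \<union> fv B"
| "fv (Or A B) = fv A \<union> fv B"
| "fv (Imp A B) = fv A \<union> fv B"
| "fv (All x A) = fv A - {x}"
| "fv (Ex x A) = fv A - {x}"

fun consts_form :: "('c, 'p) form \<Rightarrow> 'c set" where
  "consts_form FBot = {}"
| "consts_form (Atom p ts) = (\<Union>t\<in>set ts. consts_trm t)"
| "consts_form (Eq s t) = consts_trm s \<union> consts_trm t"
| "consts_form (And A B) = consts_form A \<union> consts_form B"
| "consts_form (Or A B) = consts_form A \<union> consts_form B"
| "consts_form (Imp A B) = consts_form A \<union> consts_form B"
| "consts_form (All x A) = consts_form A"
| "consts_form (Ex x A) = consts_form A"

fun preds :: "('c, 'p) form \<Rightarrow> ('p \<times> nat) set" where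
  "preds FBot = {}"
| "preds (Atom p ts) = {(p, length ts)}"
| "preds (Eq s t) = {}"
| "preds (And A B) = preds A \<union> preds B"
| "preds (Or A B) = preds A \<union> preds B"
| "preds (Imp A B) = preds A \<union> preds B"
| "preds (All x A) = preds A"
| "preds (Ex x A) = preds A"

definition sentence :: "('c, 'p) form \<Rightarrow> bool" where
  "sentence F \<longleftrightarrow> fv F = {}"

fun qfree :: "('c, 'p) form \<Rightarrow> bool" where
  "qfree (All x A) = False"
| "qfree (Ex x A) = False"
| "qfree (And A B) = (qfree A \<and> qfree B)"
| "qfree (Or A B) = (qfree A \<and> qfree B)"
| "qfree (Imp A B) = (qfree A \<and> qfree B)"
| "qfree _ = True"

fun subst_trm :: "'c trm \<Rightarrow> nat \<Rightarrow> 'c trm \<Rightarrow> 'c trm" where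
  "subst_trm (Var y) x t = (if y = x then t else Var y)"
| "subst_trm (Cst c) x t = Cst c"

fun subst :: "('c, 'p) form \<Rightarrow> nat \<Rightarrow> 'c trm \<Rightarrow> ('c, 'p) form" where
  "subst FBot x t = FBot"
| "subst (Atom p ts) x t = Atom p (map (\<lambda>s. subst_trm s x t) ts)"
| "subst (Eq s1 s2) x t = Eq (subst_trm s1 x t) (subst_trm s2 x t)"
| "subst (And A B) x t = And (subst A x t) (subst B x t)"
| "subst (Or A B) x t = Or (subst A x t) (subst B x t)"
| "subst (Imp A B) x t = Imp (subst A x t) (subst B x t)"
| "subst (All y A) x t = (if y = x then All y A else All y (subst A x t))"
| "subst (Ex y A) x t = (if y = x then Ex y A else Ex y (subst A x t))"

fun freefor :: "'c trm \<Rightarrow> nat \<Rightarrow> ('c, 'p) form \<Rightarrow> bool" where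
  "freefor t x (And A B) = (freefor t x A \<and> freefor t x B)"
| "freefor t x (Or A B) = (freefor t x A \<and> freefor t x B)"
| "freefor t x (Imp A B) = (freefor t x A \<and> freefor t x B)"
| "freefor t x (All y A) = (y = x \<or> x \<notin> fv A \<or> (y \<notin> vars_trm t \<and> freefor t x A))"
| "freefor t x (Ex y A) = (y = x \<or> x \<notin> fv A \<or> (y \<notin> vars_trm t \<and> freefor t x A))"
| "freefor t x _ = True"

fun qdepth :: "('c, 'p) form \<Rightarrow> nat" where
  "qdepth (All x A) = Suc (qdepth A)"
| "qdepth (Ex x A) = Suc (qdepth A)"
| "qdepth _ = 0"

lemma qdepth_subst[simp]: "qdepth (subst A x t) = qdepth A"
  by (induction A) auto

section \<open>Derivability in INT= + DE (natural deduction, sequents with a set of premises)\<close>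

inductive deriv_DE :: "('c, 'p) form set \<Rightarrow> ('c, 'p) form \<Rightarrow> bool" (infix "\<turnstile>\<^sub>D\<^sub>E" 55) where
  Assm: "A \<in> \<Gamma> \<Longrightarrow> \<Gamma> \<turnstile>\<^sub>D\<^sub>E A"
| BotE: "\<Gamma> \<turnstile>\<^sub>D\<^sub>E FBot \<Longrightarrow> \<Gamma> \<turnstile>\<^sub>D\<^sub>E A"
| AndI: "\<Gamma> \<turnstile>\<^sub>D\<^sub>E A \<Longrightarrow> \<Gamma> \<turnstile>\<^sub>D\<^sub>E B \<Longrightarrow> \<Gamma> \<turnstile>\<^sub>D\<^sub>E And A B"
| AndE1: "\<Gamma> \<turnstile>\<^sub>D\<^sub>E And A B \<Longrightarrow> \<Gamma> \<turnstile>\<^sub>D\<^sub>E A"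
| AndE2: "\<Gamma> \<turnstile>\<^sub>D\<^sub>E And A B \<Longrightarrow> \<Gamma> \<turnstile>\<^sub>D\<^sub>E B"
| OrI1: "\<Gamma> \<turnstile>\<^sub>D\<^sub>E A \<Longrightarrow> \<Gamma> \<turnstile>\<^sub>D\<^sub>E Or A B"
| OrI2: "\<Gamma> \<turnstile>\<^sub>D\<^sub>E B \<Longrightarrow> \<Gamma> \<turnstile>\<^sub>D\<^sub>E Or A B"
| OrE: "\<Gamma> \<turnstile>\<^sub>D\<^sub>E Or A B \<Longrightarrow> insert A \<Gamma> \<turnstile>\<^sub>D\<^sub>E C \<Longrightarrow> insert B \<Gamma> \<turnstile>\<^sub>D\<^sub>E C \<Longrightarrow> \<Gamma> \<turnstile>\<^sub>D\<^sub>E C"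
| ImpI: "insert A \<Gamma> \<turnstile>\<^sub>D\<^sub>E B \<Longrightarrow> \<Gamma> \<turnstile>\<^sub>D\<^sub>E Imp A B"
| ImpE: "\<Gamma> \<turnstile>\<^sub>D\<^sub>E Imp A B \<Longrightarrow> \<Gamma> \<turnstile>\<^sub>D\<^sub>E A \<Longrightarrow> \<Gamma> \<turnstile>\<^sub>D\<^sub>E B"
| AllI: "\<Gamma> \<turnstile>\<^sub>D\<^sub>E A \<Longrightarrow> x \<notin> (\<Union>G\<in>\<Gamma>. fv G) \<Longrightarrow> \<Gamma> \<turnstile>\<^sub>D\<^sub>E All x A"
| AllE: "\<Gamma> \<turnstile>\<^sub>D\<^sub>E All x A \<Longrightarrow> freefor t x A \<Longrightarrow> \<Gamma> \<turnstile>\<^sub>D\<^sub>E subst A x t"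
| ExI: "\<Gamma> \<turnstile>\<^sub>D\<^sub>E subst A x t \<Longrightarrow> freefor t x A \<Longrightarrow> \<Gamma> \<turnstile>\<^sub>D\<^sub>E Ex x A"
| ExE: "\<Gamma> \<turnstile>\<^sub>D\<^sub>E Ex x A \<Longrightarrow> insert A \<Gamma> \<turnstile>\<^sub>D\<^sub>E B \<Longrightarrow> x \<notin> (\<Union>G\<in>\<Gamma>. fv G) \<Longrightarrow> x \<notin> fv B
        \<Longrightarrow> \<Gamma> \<turnstile>\<^sub>D\<^sub>E B"
| EqRefl: "\<Gamma> \<turnstile>\<^sub>D\<^sub>E Eq t t"
| EqSubst: "\<Gamma> \<turnstile>\<^sub>D\<^sub>E Eq s t \<Longrightarrow> \<Gamma> \<turnstile>\<^sub>D\<^sub>E subst A x s \<Longrightarrow> freefor s x A \<Longrightarrow> freefor t x A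
        \<Longrightarrow> \<Gamma> \<turnstile>\<^sub>D\<^sub>E subst A x t"
| DE: "\<Gamma> \<turnstile>\<^sub>D\<^sub>E Or (Eq s t) (Neg (Eq s t))"

section \<open>Restricted variables, weak restriction, semi-safety, safety\<close>

fun RV :: "('c, 'p) form \<Rightarrow> nat set" where
  "RV FBot = {}"
| "RV (Atom p ts) = (\<Union>t\<in>set ts. vars_trm t)"
| "RV (Eq s t) = (case (s, t) of (Var _, Var _) \<Rightarrow> {} | _ \<Rightarrow> vars_trm s \<union> vars_trm t)"
| "RV (And A B) = RV A \<union> RV B"
| "RV (Or A B) = RV A \<inter> RV B"
| "RV (Imp A B) = {}"
| "RV (All x A) = {}"
| "RV (Ex x A) = {}"

fun simpf :: "('c, 'p) form \<Rightarrow> ('c, 'p) form" where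
  "simpf (And A B) = (let A' = simpf A; B' = simpf B in
      if A' = FBot \<or> B' = FBot then FBot
      else if A' = FTop then B' else if B' = FTop then A' else And A' B')"
| "simpf (Or A B) = (let A' = simpf A; B' = simpf B in
      if A' = FBot then B' else if B' = FBot then A'
      else if A' = FTop \<or> B' = FTop then FTop else Or A' B')"
| "simpf (Imp A B) = (let A' = simpf A; B' = simpf B in
      if A' = FBot \<or> B' = FTop then FTop
      else if A' = FTop then B' else Imp A' B')"
| "simpf (All x A) = All x (simpf A)"
| "simpf (Ex x A) = Ex x (simpf A)"
| "simpf A = A"

fun kill :: "nat \<Rightarrow> ('c, 'p) form \<Rightarrow> ('c, 'p) form" where
  "kill x FBot = FBot"
| "kill x (Atom p ts) = (if x \<in> RV (Atom p ts) then FBot else Atom p ts)"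
| "kill x (Eq s t) = (if x \<in> RV (Eq s t :: ('c, 'p) form) then FBot else Eq s t)"
| "kill x (And A B) = And (kill x A) (kill x B)"
| "kill x (Or A B) = Or (kill x A) (kill x B)"
| "kill x (Imp A B) = Imp (kill x A) (kill x B)"
| "kill x (All y A) = All y (kill x A)"
| "kill x (Ex y A) = Ex y (kill x A)"

definition pos_weakly_restricted :: "nat \<Rightarrow> ('c, 'p) form \<Rightarrow> bool" where
  "pos_weakly_restricted x G \<longleftrightarrow> simpf (kill x G) = FTop"

definition neg_weakly_restricted :: "nat \<Rightarrow> ('c, 'p) form \<Rightarrow> bool" where
  "neg_weakly_restricted x G \<longleftrightarrow> simpf (kill x G) = FBot"

text \<open>Positions of subformula occurrences: paths (0 = left/only child, 1 = right child).\<close>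
fun subf_at :: "('c, 'p) form \<Rightarrow> nat list \<Rightarrow> ('c, 'p) form option" where
  "subf_at A [] = Some A"
| "subf_at (And A B) (i # p) = (if i = 0 then subf_at A p else if i = 1 then subf_at B p else None)"
| "subf_at (Or A B) (i # p) = (if i = 0 then subf_at A p else if i = 1 then subf_at B p else None)"
| "subf_at (Imp A B) (i # p) = (if i = 0 then subf_at A p else if i = 1 then subf_at B p else None)"
| "subf_at (All x A) (i # p) = (if i = 0 then subf_at A p else None)"
| "subf_at (Ex x A) (i # p) = (if i = 0 then subf_at A p else None)"
| "subf_at _ (i # p) = None"

fun ante_count :: "('c, 'p) form \<Rightarrow> nat list \<Rightarrow> nat" where
  "ante_count A [] = 0"
| "ante_count (Imp A B) (i # p) = (if i = 0 then Suc (ante_count A p) else ante_count B p)"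
| "ante_count (And A B) (i # p) = (if i = 0 then ante_count A p else ante_count B p)"
| "ante_count (Or A B) (i # p) = (if i = 0 then ante_count A p else ante_count B p)"
| "ante_count (All x A) (i # p) = ante_count A p"
| "ante_count (Ex x A) (i # p) = ante_count A p"
| "ante_count _ (i # p) = 0"

fun is_atomic :: "('c, 'p) form \<Rightarrow> bool" where
  "is_atomic (Atom p ts) = True"
| "is_atomic (Eq s t) = True"
| "is_atomic FBot = True"
| "is_atomic _ = False"

text \<open>Prenex formula with quantifier prefix qs (True = universal, False = existential).\<close>
fun prenex :: "(bool \<times> nat) list \<Rightarrow> ('c, 'p) form \<Rightarrow> ('c, 'p) form" where
  "prenex [] M = M"
| "prenex ((q, x) # qs) M = (if q then All x (prenex qs M) else Ex x (prenex qs M))"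

text \<open>Occurrences of a variable x in M are represented by (position p of the atomic
  formula containing it, x); the subformulas containing the occurrence are those at
  prefixes of p.  Positions inside M have the same polarity in M and in the sentence.\<close>
definition semi_safe_matrix :: "(bool \<times> nat) list \<Rightarrow> ('c, 'p) form \<Rightarrow> bool" where
  "semi_safe_matrix qs M \<longleftrightarrow>
     (\<forall>x \<in> snd ` set qs. \<forall>p A. subf_at M p = Some A \<and> is_atomic A \<and> x \<in> fv A
        \<and> ante_count M p = 0 \<longrightarrow>
        (\<exists>q r G H. p = q @ r \<and> subf_at M q = Some (Imp G H) \<and> x \<in> RV G))"

definition safe_matrix :: "(bool \<times> nat) list \<Rightarrow> ('c, 'p) form \<Rightarrow> bool" where
  "safe_matrix qs M \<longleftrightarrow>
     (\<forall>(Q, x) \<in> set qs. \<forall>p A. subf_at M p = Some A \<and> is_atomic A \<and> x \<in> fv A \<longrightarrow>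
        (\<exists>q r G. p = q @ r \<and> subf_at M q = Some G \<and>
          (if Q then (even (ante_count M q) \<and> pos_weakly_restricted x G)
                   \<or> (odd (ante_count M q) \<and> neg_weakly_restricted x G)
                else (odd (ante_count M q) \<and> pos_weakly_restricted x G)
                   \<or> (even (ante_count M q) \<and> neg_weakly_restricted x G))))"

definition safe :: "('c, 'p) form \<Rightarrow> bool" where
  "safe F \<longleftrightarrow> (\<exists>qs M. F = prenex qs M \<and> qfree M \<and> distinct (map snd qs) \<and> sentence F
      \<and> semi_safe_matrix qs M \<and> safe_matrix qs M)"

fun conj_list :: "('c, 'p) form list \<Rightarrow> ('c, 'p) form" where
  "conj_list [] = FTop"
| "conj_list [A] = A"
| "conj_list (A # As) = And A (conj_list As)"

fun disj_list :: "('c, 'p) form list \<Rightarrow> ('c, 'p) form" where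
  "disj_list [] = FBot"
| "disj_list [A] = A"
| "disj_list (A # As) = Or A (disj_list As)"

text \<open>The finite set of constants c is given as a (nonempty) list cs with set cs = c.\<close>
function ground :: "'c list \<Rightarrow> ('c, 'p) form \<Rightarrow> ('c, 'p) form" where
  "ground cs (All x G) = conj_list (map (\<lambda>c. ground cs (subst G x (Cst c))) cs)"
| "ground cs (Ex x G) = disj_list (map (\<lambda>c. ground cs (subst G x (Cst c))) cs)"
| "ground cs FBot = FBot"
| "ground cs (Atom p ts) = Atom p ts"
| "ground cs (Eq s t) = Eq s t"
| "ground cs (And A B) = And A B"
| "ground cs (Or A B) = Or A B"
| "ground cs (Imp A B) = Imp A B"
  by pat_completeness auto
termination by (relation "measure (\<lambda>(cs, F). qdepth F)") auto

definition in_c :: "'c list \<Rightarrow> 'c trm list \<Rightarrow> ('c, 'p) form" where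
  "in_c cs ts = conj_list (map (\<lambda>t. disj_list (map (\<lambda>c. Eq t (Cst c)) cs)) ts)"

definition spp_axiom :: "'c list \<Rightarrow> 'p \<Rightarrow> nat \<Rightarrow> ('c, 'p) form" where
  "spp_axiom cs p n = foldr All [0..<n]
      (Imp (Atom p (map Var [0..<n])) (in_c cs (map Var [0..<n])))"

text \<open>SPP_c, given as the set of its conjuncts (one per predicate constant of F).\<close>
definition SPP :: "'c list \<Rightarrow> ('c, 'p) form \<Rightarrow> ('c, 'p) form set" where
  "SPP cs F = {spp_axiom cs p n | p n. (p, n) \<in> preds F}"

end

theory Submission
  imports Defs
begin

text \<open>Induction on the quantifier prefix.  For F = Q x. P(x) the induction hypothesis makes the
  grounding equivalent to the conjunction (Q = \<forall>) or disjunction (Q = \<exists>) of the instances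
  P(c), c among the given constants; so it remains to derive \<forall>x. P(x) from all instances, and
  some instance from P(x).  Decidable equality lets us split on D(x), the disjunction of the
  equations x = c.  If D(x) holds, substitution of equals suffices.  If \<not>D(x) holds, SPP refutes
  every atom A with x \<in> RV(A), so every weakly restricted subformula collapses to \<top> or \<bottom>.
  Replacing the subformulas provided by safety in this way yields a formula R without x that is
  equivalent to P(x) under \<not>D(x), and the polarity conditions of safety make the replacement
  monotone: P(c) \<rightarrow> R for \<forall> and R \<rightarrow> P(c) for \<exists>, for every constant c.\<close>

lemma finite_vars_trm [simp]: "finite (vars_trm t)"
  by (cases t) auto

lemma mem_vars_trm_iff: "x \<in> vars_trm t \<longleftrightarrow> t = Var x"
  by (cases t) auto

lemma subst_trm_Var_self [simp]: "subst_trm s x (Var x) = s"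
  by (cases s) auto

lemma subst_Var_self [simp]: "subst A x (Var x) = A"
  by (induction A) (auto simp: map_idI)

lemma freefor_Var_self [simp]: "freefor (Var x) x A"
  by (induction A) auto

lemma freefor_Cst [simp]: "freefor (Cst c) x A"
  by (induction A) auto

lemma freefor_qfree: "qfree B \<Longrightarrow> freefor t x B"
  by (induction B) auto

lemma vars_subst_trm_Cst [simp]: "vars_trm (subst_trm s x (Cst c)) = vars_trm s - {x}"
  by (cases s) auto

lemma fv_subst_Cst [simp]: "fv (subst A x (Cst c)) = fv A - {x}"
  by (induction A) auto

lemma subst_trm_trivial: "x \<notin> vars_trm s \<Longrightarrow> subst_trm s x t = s"
  by (cases s) auto

lemma subst_trivial: "x \<notin> fv A \<Longrightarrow> subst A x t = A"
  by (induction A) (auto simp: subst_trm_trivial map_idI)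

lemma qfree_subst [simp]: "qfree (subst A x t) = qfree A"
  by (induction A) auto

lemma preds_subst [simp]: "preds (subst A x t) = preds A"
  by (induction A) auto

lemma is_atomic_subst [simp]: "is_atomic (subst A x t) = is_atomic A"
  by (cases A) auto

lemma consts_subst_trm_Cst: "consts_trm (subst_trm s x (Cst c)) \<subseteq> insert c (consts_trm s)"
  by (cases s) auto

lemma consts_subst_Cst: "consts_form (subst A x (Cst c)) \<subseteq> insert c (consts_form A)"
proof (induction A)
  case (Atom p ts)
  then show ?case
    using consts_subst_trm_Cst[of _ x c] by (simp; blast)
next
  case (Eq s t)
  then show ?case
    using consts_subst_trm_Cst[of _ x c] by (simp; blast)
qed auto

lemma subf_at_subst:
  "qfree M \<Longrightarrow> subf_at (subst M x t) p = map_option (\<lambda>A. subst A x t) (subf_at M p)"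
  by (induction M arbitrary: p) (case_tac p; simp)+

lemma ante_count_subst [simp]: "ante_count (subst M x t) p = ante_count M p"
  by (induction M arbitrary: p) (case_tac p; simp)+

lemma fv_prenex [simp]: "fv (prenex qs M) = fv M - set (map snd qs)"
  by (induction qs) (auto split: if_splits)

lemma consts_prenex [simp]: "consts_form (prenex qs M) = consts_form M"
proof (induction qs)
  case (Cons q qs)
  then show ?case
    by (cases q) simp
qed simp

lemma preds_prenex [simp]: "preds (prenex qs M) = preds M"
proof (induction qs)
  case (Cons q qs)
  then show ?case
    by (cases q) simp
qed simp

lemma subst_prenex:
  "x \<notin> set (map snd qs) \<Longrightarrow> subst (prenex qs M) x t = prenex qs (subst M x t)"
  by (induction qs) (auto split: if_splits)

lemma fv_foldr_All [simp]: "fv (foldr All xs B) = fv B - set xs"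
  by (induction xs) auto

lemma subst_foldr_All: "x \<notin> set xs \<Longrightarrow> subst (foldr All xs B) x t = foldr All xs (subst B x t)"
  by (induction xs) auto

lemma freefor_foldr_All: "qfree B \<Longrightarrow> vars_trm t \<inter> set xs = {} \<Longrightarrow> freefor t x (foldr All xs B)"
  by (induction xs) (auto simp: freefor_qfree)

lemma fv_conj_list: "fv (conj_list As) \<subseteq> (\<Union>A\<in>set As. fv A)"
  by (induction As rule: conj_list.induct) auto

lemma fv_disj_list: "fv (disj_list As) \<subseteq> (\<Union>A\<in>set As. fv A)"
  by (induction As rule: disj_list.induct) auto

lemma qfree_conj_list: "(\<And>A. A \<in> set As \<Longrightarrow> qfree A) \<Longrightarrow> qfree (conj_list As)"
  by (induction As rule: conj_list.induct) auto

lemma qfree_disj_list: "(\<And>A. A \<in> set As \<Longrightarrow> qfree A) \<Longrightarrow> qfree (disj_list As)"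
  by (induction As rule: disj_list.induct) auto

lemma in_c_single: "in_c cs [t] = disj_list (map (\<lambda>c. Eq t (Cst c)) cs)"
  by (simp add: in_c_def)

lemma fv_in_c: "fv (in_c cs ts) \<subseteq> (\<Union>t\<in>set ts. vars_trm t)"
  unfolding in_c_def using fv_conj_list fv_disj_list by fastforce

lemma qfree_in_c: "qfree (in_c cs ts)"
  unfolding in_c_def by (auto intro!: qfree_conj_list qfree_disj_list)

lemma fv_spp_axiom: "fv (spp_axiom cs p n) = {}"
  using fv_in_c[of cs "map Var [0..<n]"] by (auto simp: spp_axiom_def)

lemma fv_ground: "fv (ground cs A) \<subseteq> fv A"
proof (induction cs A rule: ground.induct)
  case (1 cs x A)
  then show ?case
    using fv_conj_list[of "map (\<lambda>c. ground cs (subst A x (Cst c))) cs"] by fastforce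
next
  case (2 cs x A)
  then show ?case
    using fv_disj_list[of "map (\<lambda>c. ground cs (subst A x (Cst c))) cs"] by fastforce
qed auto

lemma ground_qfree: "qfree A \<Longrightarrow> ground cs A = A"
  by (cases A) auto

fun truth :: "bool \<Rightarrow> ('c, 'p) form" where
  "truth True = FTop"
| "truth False = FBot"

lemma fv_truth [simp]: "fv (truth b) = {}"
  by (cases b) auto

lemma subst_truth [simp]: "subst (truth b) x t = truth b"
  by (cases b) auto

section \<open>Derivability in all admissible contexts\<close>

text \<open>Weakening
  is thereby built in, and a variable outside W is fresh for every such context, which
  discharges the eigenvariable conditions of \<forall>-introduction and \<exists>-elimination.\<close>
definition derivable :: "('c, 'p) form set \<Rightarrow> nat set \<Rightarrow> ('c, 'p) form \<Rightarrow> bool" where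
  "derivable S W A \<longleftrightarrow> (\<forall>\<Gamma>. S \<subseteq> \<Gamma> \<longrightarrow> (\<Union>G\<in>\<Gamma>. fv G) \<subseteq> W \<longrightarrow> \<Gamma> \<turnstile>\<^sub>D\<^sub>E A)"

lemma derivableD: "derivable S W A \<Longrightarrow> S \<subseteq> \<Gamma> \<Longrightarrow> (\<Union>G\<in>\<Gamma>. fv G) \<subseteq> W \<Longrightarrow> \<Gamma> \<turnstile>\<^sub>D\<^sub>E A"
  unfolding derivable_def by simp

lemma derivable_mono: "derivable S W A \<Longrightarrow> S \<subseteq> S' \<Longrightarrow> W' \<subseteq> W \<Longrightarrow> derivable S' W' A"
  unfolding derivable_def by (meson order_trans)

lemma derivable_insert: "derivable S W A \<Longrightarrow> derivable (insert B S) W A"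
  by (erule derivable_mono) auto

lemma derivable_Assm: "A \<in> S \<Longrightarrow> derivable S W A"
  unfolding derivable_def by (auto intro: deriv_DE.Assm)

lemma derivable_BotE: "derivable S W FBot \<Longrightarrow> derivable S W A"
  unfolding derivable_def by (auto intro: deriv_DE.BotE)

lemma derivable_AndI: "derivable S W A \<Longrightarrow> derivable S W B \<Longrightarrow> derivable S W (And A B)"
  unfolding derivable_def by (auto intro: deriv_DE.AndI)

lemma derivable_AndE1: "derivable S W (And A B) \<Longrightarrow> derivable S W A"
  unfolding derivable_def by (auto intro: deriv_DE.AndE1)

lemma derivable_AndE2: "derivable S W (And A B) \<Longrightarrow> derivable S W B"
  unfolding derivable_def by (auto intro: deriv_DE.AndE2)

lemma derivable_OrI1: "derivable S W A \<Longrightarrow> derivable S W (Or A B)"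
  unfolding derivable_def by (auto intro: deriv_DE.OrI1)

lemma derivable_OrI2: "derivable S W B \<Longrightarrow> derivable S W (Or A B)"
  unfolding derivable_def by (auto intro: deriv_DE.OrI2)

lemma derivable_OrE:
  assumes "derivable S W (Or A B)" "derivable (insert A S) W C" "derivable (insert B S) W C"
    and "fv A \<subseteq> W" "fv B \<subseteq> W"
  shows "derivable S W C"
  unfolding derivable_def
proof (intro allI impI)
  fix \<Gamma> assume \<Gamma>: "S \<subseteq> \<Gamma>" "(\<Union>G\<in>\<Gamma>. fv G) \<subseteq> W"
  have "\<Gamma> \<turnstile>\<^sub>D\<^sub>E Or A B"
    by (rule derivableD[OF assms(1) \<Gamma>])
  moreover have "insert A \<Gamma> \<turnstile>\<^sub>D\<^sub>E C"
    by (rule derivableD[OF assms(2)]) (use \<Gamma> assms(4) in auto)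
  moreover have "insert B \<Gamma> \<turnstile>\<^sub>D\<^sub>E C"
    by (rule derivableD[OF assms(3)]) (use \<Gamma> assms(5) in auto)
  ultimately show "\<Gamma> \<turnstile>\<^sub>D\<^sub>E C"
    by (rule deriv_DE.OrE)
qed

lemma derivable_ImpI:
  assumes "derivable (insert A S) W B" "fv A \<subseteq> W"
  shows "derivable S W (Imp A B)"
  unfolding derivable_def
proof (intro allI impI)
  fix \<Gamma> assume "S \<subseteq> \<Gamma>" "(\<Union>G\<in>\<Gamma>. fv G) \<subseteq> W"
  then have "insert A \<Gamma> \<turnstile>\<^sub>D\<^sub>E B"
    by (intro derivableD[OF assms(1)]) (use assms(2) in auto)
  then show "\<Gamma> \<turnstile>\<^sub>D\<^sub>E Imp A B"
    by (rule deriv_DE.ImpI)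
qed

lemma derivable_ImpE: "derivable S W (Imp A B) \<Longrightarrow> derivable S W A \<Longrightarrow> derivable S W B"
  unfolding derivable_def by (auto intro: deriv_DE.ImpE)

lemma derivable_AllI:
  assumes "derivable S W A" "x \<notin> W"
  shows "derivable S W (All x A)"
  unfolding derivable_def
proof (intro allI impI)
  fix \<Gamma> assume \<Gamma>: "S \<subseteq> \<Gamma>" "(\<Union>G\<in>\<Gamma>. fv G) \<subseteq> W"
  then have "x \<notin> (\<Union>G\<in>\<Gamma>. fv G)"
    using assms(2) by blast
  with derivableD[OF assms(1) \<Gamma>] show "\<Gamma> \<turnstile>\<^sub>D\<^sub>E All x A"
    by (rule deriv_DE.AllI)
qed

lemma derivable_AllE: "derivable S W (All x A) \<Longrightarrow> freefor t x A \<Longrightarrow> derivable S W (subst A x t)"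
  unfolding derivable_def by (auto intro: deriv_DE.AllE)

lemma derivable_ExI: "derivable S W (subst A x t) \<Longrightarrow> freefor t x A \<Longrightarrow> derivable S W (Ex x A)"
  unfolding derivable_def by (auto intro: deriv_DE.ExI)

lemma derivable_ExE:
  assumes "derivable S W (Ex x A)" "derivable (insert A S) (insert x W) B"
    and "x \<notin> W" "x \<notin> fv B" "fv A \<subseteq> insert x W"
  shows "derivable S W B"
  unfolding derivable_def
proof (intro allI impI)
  fix \<Gamma> assume \<Gamma>: "S \<subseteq> \<Gamma>" "(\<Union>G\<in>\<Gamma>. fv G) \<subseteq> W"
  have "\<Gamma> \<turnstile>\<^sub>D\<^sub>E Ex x A"
    by (rule derivableD[OF assms(1) \<Gamma>])
  moreover have "insert A \<Gamma> \<turnstile>\<^sub>D\<^sub>E B"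
    by (rule derivableD[OF assms(2)]) (use \<Gamma> assms(5) in auto)
  moreover have "x \<notin> (\<Union>G\<in>\<Gamma>. fv G)"
    using \<Gamma>(2) assms(3) by blast
  ultimately show "\<Gamma> \<turnstile>\<^sub>D\<^sub>E B"
    using assms(4) by (rule deriv_DE.ExE)
qed

lemma derivable_EqRefl: "derivable S W (Eq t t)"
  unfolding derivable_def by (auto intro: deriv_DE.EqRefl)

lemma derivable_EqSubst:
  "derivable S W (Eq s t) \<Longrightarrow> derivable S W (subst A x s) \<Longrightarrow> freefor s x A \<Longrightarrow> freefor t x A
   \<Longrightarrow> derivable S W (subst A x t)"
  unfolding derivable_def by (auto intro: deriv_DE.EqSubst)

lemma derivable_DE: "derivable S W (Or (Eq s t) (Neg (Eq s t)))"
  unfolding derivable_def by (auto intro: deriv_DE.DE)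

lemma derivable_Eq_sym:
  assumes "derivable S W (Eq s t)"
  shows "derivable S W (Eq t s)"
proof -
  obtain z where z: "z \<notin> vars_trm s \<union> vars_trm t"
    using ex_new_if_finite[OF infinite_UNIV_nat, of "vars_trm s \<union> vars_trm t"] by auto
  have "derivable S W (subst (Eq (Var z) s) z t)"
    by (rule derivable_EqSubst[OF assms]) (use z derivable_EqRefl in \<open>auto simp: subst_trm_trivial\<close>)
  then show ?thesis
    using z by (simp add: subst_trm_trivial)
qed

lemma derivable_FTop: "derivable S W FTop"
  by (rule derivable_ImpI) (auto intro: derivable_Assm)

lemma derivable_ex_falso: "fv A \<subseteq> W \<Longrightarrow> derivable S W (Imp FBot A)"
  by (rule derivable_ImpI, rule derivable_BotE, rule derivable_Assm) auto

lemma derivable_Imp_refl: "fv A \<subseteq> W \<Longrightarrow> derivable S W (Imp A A)"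
  by (rule derivable_ImpI) (auto intro: derivable_Assm)

lemma derivable_Iff_refl: "fv A \<subseteq> W \<Longrightarrow> derivable S W (Iff A A)"
  by (simp add: derivable_AndI derivable_Imp_refl)

lemma derivable_IffD1: "derivable S W (Iff A B) \<Longrightarrow> derivable S W A \<Longrightarrow> derivable S W B"
  by (rule derivable_ImpE[OF derivable_AndE1])

lemma derivable_IffD2: "derivable S W (Iff A B) \<Longrightarrow> derivable S W B \<Longrightarrow> derivable S W A"
  by (rule derivable_ImpE[OF derivable_AndE2])

lemma derivable_Imp_constI: "derivable S W B \<Longrightarrow> fv A \<subseteq> W \<Longrightarrow> derivable S W (Imp A B)"
  by (rule derivable_ImpI[OF derivable_insert])

lemma derivable_Imp_NegI: "derivable S W (Neg A) \<Longrightarrow> fv A \<subseteq> W \<Longrightarrow> derivable S W (Imp A B)"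
  by (rule derivable_ImpI, rule derivable_BotE, rule derivable_ImpE[OF derivable_insert])
    (auto intro: derivable_Assm)

lemma derivable_Neg_AndI1:
  assumes "derivable S W (Neg A)" "fv A \<subseteq> W" "fv B \<subseteq> W"
  shows "derivable S W (Neg (And A B))"
proof (rule derivable_ImpI)
  have "derivable (insert (And A B) S) W A"
    by (rule derivable_AndE1[where B = B], rule derivable_Assm) simp
  then show "derivable (insert (And A B) S) W FBot"
    by (rule derivable_ImpE[OF derivable_insert[OF assms(1)]])
qed (use assms(2,3) in auto)

lemma derivable_Neg_AndI2:
  assumes "derivable S W (Neg B)" "fv A \<subseteq> W" "fv B \<subseteq> W"
  shows "derivable S W (Neg (And A B))"
proof (rule derivable_ImpI)
  have "derivable (insert (And A B) S) W B"
    by (rule derivable_AndE2[where A = A], rule derivable_Assm) simp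
  then show "derivable (insert (And A B) S) W FBot"
    by (rule derivable_ImpE[OF derivable_insert[OF assms(1)]])
qed (use assms(2,3) in auto)

lemma derivable_Neg_OrI:
  assumes "derivable S W (Neg A)" "derivable S W (Neg B)" "fv A \<subseteq> W" "fv B \<subseteq> W"
  shows "derivable S W (Neg (Or A B))"
proof (rule derivable_ImpI)
  let ?S = "insert (Or A B) S"
  have "derivable (insert A ?S) W FBot"
    by (rule derivable_ImpE[OF derivable_mono[OF assms(1)]]) (auto intro: derivable_Assm)
  moreover have "derivable (insert B ?S) W FBot"
    by (rule derivable_ImpE[OF derivable_mono[OF assms(2)]]) (auto intro: derivable_Assm)
  moreover have "derivable ?S W (Or A B)"
    by (rule derivable_Assm) simp
  ultimately show "derivable ?S W FBot"
    using assms(3,4) by (meson derivable_OrE)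
qed (use assms(3,4) in auto)

lemma derivable_Neg_ImpI:
  assumes "derivable S W A" "derivable S W (Neg B)" "fv A \<subseteq> W" "fv B \<subseteq> W"
  shows "derivable S W (Neg (Imp A B))"
proof (rule derivable_ImpI)
  let ?S = "insert (Imp A B) S"
  have "derivable ?S W B"
    by (rule derivable_ImpE[OF derivable_Assm derivable_insert[OF assms(1)]]) simp
  then show "derivable ?S W FBot"
    by (rule derivable_ImpE[OF derivable_insert[OF assms(2)]])
qed (use assms(3,4) in auto)

lemma derivable_conj_listI:
  "(\<And>A. A \<in> set As \<Longrightarrow> derivable S W A) \<Longrightarrow> derivable S W (conj_list As)"
  by (induction As rule: conj_list.induct) (auto intro: derivable_AndI derivable_FTop)

lemma derivable_conj_listD:
  "derivable S W (conj_list As) \<Longrightarrow> A \<in> set As \<Longrightarrow> derivable S W A"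
  by (induction As rule: conj_list.induct) (auto dest: derivable_AndE1 derivable_AndE2)

lemma derivable_disj_listI:
  "A \<in> set As \<Longrightarrow> derivable S W A \<Longrightarrow> derivable S W (disj_list As)"
  by (induction As rule: disj_list.induct) (auto intro: derivable_OrI1 derivable_OrI2)

lemma derivable_disj_listE:
  assumes "derivable S W (disj_list As)"
    and "\<And>A. A \<in> set As \<Longrightarrow> derivable (insert A S) W C"
    and "\<And>A. A \<in> set As \<Longrightarrow> fv A \<subseteq> W"
  shows "derivable S W C"
  using assms
proof (induction As arbitrary: S rule: disj_list.induct)
  case 1
  then show ?case
    by (auto intro: derivable_BotE)
next
  case (2 A)
  then show ?case
    by (auto intro: derivable_ImpE[OF derivable_ImpI])
next
  case (3 A B As)
  let ?D = "disj_list (B # As)"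
  have "derivable (insert ?D S) W C"
  proof (rule "3.IH")
    show "derivable (insert ?D S) W ?D"
      by (rule derivable_Assm) simp
  next
    fix A' assume "A' \<in> set (B # As)"
    then show "derivable (insert A' (insert ?D S)) W C" "fv A' \<subseteq> W"
      using derivable_insert[OF "3.prems"(2)] "3.prems"(3) by (auto simp: insert_commute)
  qed
  moreover have "derivable S W (Or A ?D)"
    using "3.prems"(1) by simp
  moreover have "derivable (insert A S) W C" "fv A \<subseteq> W" "fv ?D \<subseteq> W"
    using "3.prems"(2,3) fv_disj_list[of "B # As"] by fastforce+
  ultimately show ?case
    by (meson derivable_OrE)
qed

lemma derivable_disj_list_em:
  assumes "\<And>A S. A \<in> set As \<Longrightarrow> derivable S W (Or A (Neg A))"
    and "\<And>A. A \<in> set As \<Longrightarrow> fv A \<subseteq> W"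
  shows "derivable S W (Or (disj_list As) (Neg (disj_list As)))"
  using assms
proof (induction As arbitrary: S rule: disj_list.induct)
  case 1
  show ?case
    by (rule derivable_OrI2, rule derivable_ImpI) (auto intro: derivable_Assm)
next
  case (2 A)
  then show ?case
    by simp
next
  case (3 A B As)
  let ?D = "disj_list (B # As)"
  let ?goal = "Or (Or A ?D) (Neg (Or A ?D))"
  have fv_AD: "fv A \<subseteq> W" "fv ?D \<subseteq> W"
    using fv_disj_list[of "B # As"] "3.prems"(2) by fastforce+
  have "derivable (insert (Neg A) S) W ?goal"
  proof (rule derivable_OrE[OF "3.IH"])
    show "derivable (insert ?D (insert (Neg A) S)) W ?goal"
      by (rule derivable_OrI1, rule derivable_OrI2, rule derivable_Assm) simp
    show "derivable (insert (Neg ?D) (insert (Neg A) S)) W ?goal"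
      by (rule derivable_OrI2, rule derivable_Neg_OrI) (use fv_AD in \<open>auto intro: derivable_Assm\<close>)
  qed (use "3.prems" fv_AD in auto)
  moreover have "derivable (insert A S) W ?goal"
    by (rule derivable_OrI1, rule derivable_OrI1, rule derivable_Assm) simp
  moreover have "derivable S W (Or A (Neg A))"
    using "3.prems"(1) by simp
  ultimately show ?case
    using fv_AD(1) derivable_OrE[of S W A "Neg A" ?goal] by simp
qed

lemma fv_in_c_single: "fv (in_c cs [Var x]) \<subseteq> {x}"
  unfolding in_c_single using fv_disj_list by fastforce

lemma derivable_in_c_cases:
  assumes "derivable (insert (in_c cs [Var x]) S) W C"
    and "derivable (insert (Neg (in_c cs [Var x])) S) W C" "x \<in> W"
  shows "derivable S W C"
proof -
  have "derivable S W (Or (in_c cs [Var x]) (Neg (in_c cs [Var x])))"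
    unfolding in_c_single by (rule derivable_disj_list_em) (use assms(3) in \<open>auto intro: derivable_DE\<close>)
  moreover have "fv (in_c cs [Var x]) \<subseteq> W"
    using fv_in_c_single assms(3) by blast
  ultimately show ?thesis
    using derivable_OrE[OF _ assms(1,2)] by simp
qed

lemma derivable_And_mono:
  assumes "derivable S W (Imp A A')" "derivable S W (Imp B B')" "fv (And A B) \<subseteq> W"
  shows "derivable S W (Imp (And A B) (And A' B'))"
proof (rule derivable_ImpI)
  let ?S = "insert (And A B) S"
  have AB: "derivable ?S W (And A B)"
    by (rule derivable_Assm) simp
  show "derivable ?S W (And A' B')"
    using derivable_ImpE[OF derivable_insert[OF assms(1)] derivable_AndE1[OF AB]]
      derivable_ImpE[OF derivable_insert[OF assms(2)] derivable_AndE2[OF AB]]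
    by (rule derivable_AndI)
qed (use assms(3) in simp)

lemma derivable_Or_mono:
  assumes "derivable S W (Imp A A')" "derivable S W (Imp B B')" "fv (Or A B) \<subseteq> W"
  shows "derivable S W (Imp (Or A B) (Or A' B'))"
proof (rule derivable_ImpI)
  let ?S = "insert (Or A B) S"
  have "derivable (insert A ?S) W A'"
    by (rule derivable_ImpE[OF derivable_mono[OF assms(1)]]) (auto intro: derivable_Assm)
  then have "derivable (insert A ?S) W (Or A' B')"
    by (rule derivable_OrI1)
  moreover have "derivable (insert B ?S) W B'"
    by (rule derivable_ImpE[OF derivable_mono[OF assms(2)]]) (auto intro: derivable_Assm)
  then have "derivable (insert B ?S) W (Or A' B')"
    by (rule derivable_OrI2)
  moreover have "derivable ?S W (Or A B)"
    by (rule derivable_Assm) simp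
  ultimately show "derivable ?S W (Or A' B')"
    using assms(3) derivable_OrE[of ?S W A B "Or A' B'"] by simp
qed (use assms(3) in simp)

lemma derivable_Imp_mono:
  assumes "derivable S W (Imp A' A)" "derivable S W (Imp B B')" "fv (Imp A B) \<subseteq> W" "fv A' \<subseteq> W"
  shows "derivable S W (Imp (Imp A B) (Imp A' B'))"
proof (intro derivable_ImpI)
  let ?S = "insert A' (insert (Imp A B) S)"
  have "derivable ?S W A"
    by (rule derivable_ImpE[OF derivable_mono[OF assms(1)]]) (auto intro: derivable_Assm)
  then have "derivable ?S W B"
    by (rule derivable_ImpE[OF derivable_Assm, rotated]) simp
  with derivable_mono[OF assms(2)] show "derivable ?S W B'"
    by (rule derivable_ImpE) auto
qed (use assms(3,4) in simp_all)

definition imp_dir :: "bool \<Rightarrow> ('c, 'p) form \<Rightarrow> ('c, 'p) form \<Rightarrow> ('c, 'p) form" where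
  "imp_dir d A B = (if d then Imp A B else Imp B A)"

lemma derivable_imp_dir_refl: "fv A \<subseteq> W \<Longrightarrow> derivable S W (imp_dir d A A)"
  by (simp add: imp_dir_def derivable_Imp_refl)

lemma derivable_imp_dir_And:
  "derivable S W (imp_dir d A A') \<Longrightarrow> derivable S W (imp_dir d B B')
   \<Longrightarrow> fv (And A B) \<subseteq> W \<Longrightarrow> fv (And A' B') \<subseteq> W
   \<Longrightarrow> derivable S W (imp_dir d (And A B) (And A' B'))"
  unfolding imp_dir_def by (cases d) (simp_all add: derivable_And_mono)

lemma derivable_imp_dir_Or:
  "derivable S W (imp_dir d A A') \<Longrightarrow> derivable S W (imp_dir d B B')
   \<Longrightarrow> fv (Or A B) \<subseteq> W \<Longrightarrow> fv (Or A' B') \<subseteq> W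
   \<Longrightarrow> derivable S W (imp_dir d (Or A B) (Or A' B'))"
  unfolding imp_dir_def by (cases d) (simp_all add: derivable_Or_mono)

lemma derivable_imp_dir_Imp:
  "derivable S W (imp_dir (\<not> d) A A') \<Longrightarrow> derivable S W (imp_dir d B B')
   \<Longrightarrow> fv (Imp A B) \<subseteq> W \<Longrightarrow> fv (Imp A' B') \<subseteq> W
   \<Longrightarrow> derivable S W (imp_dir d (Imp A B) (Imp A' B'))"
  unfolding imp_dir_def by (cases d) (simp_all add: derivable_Imp_mono)

lemma derivable_Iff_iff_imp_dir:
  "derivable S W (Iff A B) \<longleftrightarrow> (\<forall>d. derivable S W (imp_dir d A B))"
  unfolding imp_dir_def
  by (metis derivable_AndE1 derivable_AndE2 derivable_AndI)

lemma derivable_imp_dir_truth: "fv A \<subseteq> W \<Longrightarrow> derivable S W (imp_dir d A (truth d))"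
  by (cases d) (simp_all add: imp_dir_def derivable_Imp_constI derivable_FTop derivable_ex_falso)

lemma derivable_IffI_imp_dir:
  "derivable S W (imp_dir d A B) \<Longrightarrow> derivable S W (imp_dir (\<not> d) A B) \<Longrightarrow> derivable S W (Iff A B)"
  by (cases d) (auto simp: imp_dir_def intro: derivable_AndI)

section \<open>Instances of the SPP axioms\<close>

fun ssubst_trm :: "(nat \<Rightarrow> 'c trm) \<Rightarrow> 'c trm \<Rightarrow> 'c trm" where
  "ssubst_trm \<sigma> (Var x) = \<sigma> x"
| "ssubst_trm \<sigma> (Cst c) = Cst c"

text \<open>Simultaneous substitution, meant for quantifier-free formulas: quantified subformulas are
  left unchanged.\<close>
fun ssubst :: "(nat \<Rightarrow> 'c trm) \<Rightarrow> ('c, 'p) form \<Rightarrow> ('c, 'p) form" where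
  "ssubst \<sigma> FBot = FBot"
| "ssubst \<sigma> (Atom p ts) = Atom p (map (ssubst_trm \<sigma>) ts)"
| "ssubst \<sigma> (Eq s t) = Eq (ssubst_trm \<sigma> s) (ssubst_trm \<sigma> t)"
| "ssubst \<sigma> (And A B) = And (ssubst \<sigma> A) (ssubst \<sigma> B)"
| "ssubst \<sigma> (Or A B) = Or (ssubst \<sigma> A) (ssubst \<sigma> B)"
| "ssubst \<sigma> (Imp A B) = Imp (ssubst \<sigma> A) (ssubst \<sigma> B)"
| "ssubst \<sigma> (All x A) = All x A"
| "ssubst \<sigma> (Ex x A) = Ex x A"

lemma ssubst_trm_cong: "(\<And>v. v \<in> vars_trm t \<Longrightarrow> \<sigma> v = \<tau> v) \<Longrightarrow> ssubst_trm \<sigma> t = ssubst_trm \<tau> t"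
  by (cases t) auto

lemma ssubst_trm_Var [simp]: "ssubst_trm Var t = t"
  by (cases t) auto

lemma ssubst_Var: "qfree B \<Longrightarrow> ssubst Var B = B"
  by (induction B) (auto simp: map_idI)

lemma subst_trm_eq_ssubst_trm: "subst_trm s x t = ssubst_trm (Var(x := t)) s"
  by (cases s) auto

lemma subst_eq_ssubst: "qfree B \<Longrightarrow> subst B x t = ssubst (Var(x := t)) B"
  by (induction B) (auto simp: subst_trm_eq_ssubst_trm)

lemma ssubst_trm_ssubst_trm: "ssubst_trm \<sigma> (ssubst_trm \<tau> s) = ssubst_trm (ssubst_trm \<sigma> \<circ> \<tau>) s"
  by (cases s) auto

lemma ssubst_ssubst: "qfree B \<Longrightarrow> ssubst \<sigma> (ssubst \<tau> B) = ssubst (ssubst_trm \<sigma> \<circ> \<tau>) B"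
  by (induction B) (auto simp: ssubst_trm_ssubst_trm)

lemma qfree_ssubst [simp]: "qfree B \<Longrightarrow> qfree (ssubst \<sigma> B)"
  by (induction B) auto

lemma ssubst_conj_list: "ssubst \<sigma> (conj_list As) = conj_list (map (ssubst \<sigma>) As)"
  by (induction As rule: conj_list.induct) auto

lemma ssubst_disj_list: "ssubst \<sigma> (disj_list As) = disj_list (map (ssubst \<sigma>) As)"
  by (induction As rule: disj_list.induct) auto

lemma ssubst_in_c: "ssubst \<sigma> (in_c cs ts) = in_c cs (map (ssubst_trm \<sigma>) ts)"
  by (simp add: in_c_def ssubst_conj_list ssubst_disj_list comp_def)

lemma derivable_foldr_AllI: "derivable S W A \<Longrightarrow> set xs \<inter> W = {} \<Longrightarrow> derivable S W (foldr All xs A)"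
  by (induction xs) (auto intro: derivable_AllI)

lemma derivable_foldr_AllE:
  assumes "derivable S W (foldr All xs B)" "qfree B" "distinct xs"
    and "\<And>v. v \<notin> set xs \<Longrightarrow> \<sigma> v = Var v"
    and "\<And>v. v \<in> set xs \<Longrightarrow> vars_trm (\<sigma> v) \<inter> set xs = {}"
  shows "derivable S W (ssubst \<sigma> B)"
  using assms
proof (induction xs arbitrary: B \<sigma>)
  case Nil
  then have "\<sigma> = Var"
    by auto
  with Nil show ?case
    by (simp add: ssubst_Var)
next
  case (Cons x xs)
  let ?\<sigma>' = "\<sigma>(x := Var x)"
  have "derivable S W (subst (foldr All xs B) x (\<sigma> x))"
    using Cons.prems(1,2,5) by (auto intro!: derivable_AllE freefor_foldr_All)
  then have "derivable S W (foldr All xs (subst B x (\<sigma> x)))"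
    using Cons.prems(3) by (simp add: subst_foldr_All)
  then have "derivable S W (ssubst ?\<sigma>' (subst B x (\<sigma> x)))"
    by (rule Cons.IH) (use Cons.prems in auto)
  moreover have "ssubst_trm ?\<sigma>' \<circ> Var(x := \<sigma> x) = \<sigma>"
  proof
    fix v
    have "?\<sigma>' w = Var w" if "w \<in> vars_trm (\<sigma> x)" for w
      using that Cons.prems(4)[of w] Cons.prems(5)[of x] by auto
    then have "ssubst_trm ?\<sigma>' (\<sigma> x) = \<sigma> x"
      using ssubst_trm_cong[of "\<sigma> x" ?\<sigma>' Var] by simp
    then show "(ssubst_trm ?\<sigma>' \<circ> Var(x := \<sigma> x)) v = \<sigma> v"
      by simp
  qed
  ultimately show ?case
    using Cons.prems(2) by (simp add: subst_eq_ssubst ssubst_ssubst)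
qed

lemma derivable_spp_instance:
  fixes ts :: "'c trm list" and p :: 'p
  assumes "spp_axiom cs p (length ts) \<in> S" "finite W"
  shows "derivable S W (Imp (Atom p ts) (in_c cs ts))"
proof -
  define n where "n = length ts"
  have "finite (W \<union> (\<Union>t\<in>set ts. vars_trm t))"
    using assms(2) by simp
  then obtain k where k: "W \<union> (\<Union>t\<in>set ts. vars_trm t) \<subseteq> {..<k}"
    by (auto simp: finite_nat_set_iff_bounded)
  define N where "N = k + n"
  define zs where "zs = [N..<N + n]"
  define B where "B = Imp (Atom p (map Var [0..<n])) (in_c cs (map Var [0..<n]))"
  define \<sigma>\<^sub>1 :: "nat \<Rightarrow> 'c trm" where "\<sigma>\<^sub>1 v = (if v < n then Var (N + v) else Var v)" for v
  define \<sigma>\<^sub>2 where "\<sigma>\<^sub>2 v = (if v \<in> set zs then ts ! (v - N) else Var v)" for v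
  have qfB: "qfree B"
    by (simp add: B_def qfree_in_c)
  txt \<open>The variables of ts may occur among 0, ..., n - 1, so instantiating the axiom with ts
    directly could capture them: we first rename its variables to the fresh zs and generalise.\<close>
  have "derivable S W (foldr All [0..<n] B)"
    using assms(1) by (intro derivable_Assm) (simp add: spp_axiom_def B_def n_def)
  then have "derivable S W (ssubst \<sigma>\<^sub>1 B)"
    by (rule derivable_foldr_AllE) (auto simp: qfB \<sigma>\<^sub>1_def N_def)
  then have "derivable S W (foldr All zs (ssubst \<sigma>\<^sub>1 B))"
    by (rule derivable_foldr_AllI) (use k in \<open>auto simp: zs_def N_def\<close>)
  then have "derivable S W (ssubst \<sigma>\<^sub>2 (ssubst \<sigma>\<^sub>1 B))"
  proof (rule derivable_foldr_AllE)
    have "vars_trm (ts ! i) \<subseteq> {..<k}" if "i < n" for i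
      using k that by (force simp: n_def)
    moreover have "v - N < n" if "v \<in> set zs" for v
      using that by (auto simp: zs_def)
    ultimately show "vars_trm (\<sigma>\<^sub>2 v) \<inter> set zs = {}" if "v \<in> set zs" for v
      using that by (fastforce simp: \<sigma>\<^sub>2_def zs_def N_def)
  qed (auto simp: qfB \<sigma>\<^sub>2_def zs_def)
  moreover have "map (\<lambda>i. ssubst_trm \<sigma>\<^sub>2 (\<sigma>\<^sub>1 i)) [0..<n] = ts"
    by (rule nth_equalityI) (auto simp: \<sigma>\<^sub>1_def \<sigma>\<^sub>2_def zs_def n_def)
  ultimately show ?thesis
    by (simp add: B_def ssubst_in_c comp_def)
qed

section \<open>Weakly restricted formulas outside the domain\<close>

lemma weakly_restricted_FBot [simp]:
  "\<not> pos_weakly_restricted x FBot" "neg_weakly_restricted x FBot"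
  by (simp_all add: pos_weakly_restricted_def neg_weakly_restricted_def)

lemma weakly_restricted_Atom [simp]:
  "\<not> pos_weakly_restricted x (Atom p ts)"
  "neg_weakly_restricted x (Atom p ts) \<longleftrightarrow> x \<in> RV (Atom p ts)"
  by (simp_all add: pos_weakly_restricted_def neg_weakly_restricted_def)

lemma weakly_restricted_Eq [simp]:
  "\<not> pos_weakly_restricted x (Eq s t)"
  "neg_weakly_restricted x (Eq s t :: ('c, 'p) form) \<longleftrightarrow> x \<in> RV (Eq s t :: ('c, 'p) form)"
  by (simp_all add: pos_weakly_restricted_def neg_weakly_restricted_def)

lemma weakly_restricted_And [simp]:
  "pos_weakly_restricted x (And A B) \<longleftrightarrow> pos_weakly_restricted x A \<and> pos_weakly_restricted x B"
  "neg_weakly_restricted x (And A B) \<longleftrightarrow> neg_weakly_restricted x A \<or> neg_weakly_restricted x B"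
  by (auto simp: pos_weakly_restricted_def neg_weakly_restricted_def Let_def)

lemma weakly_restricted_Or [simp]:
  "pos_weakly_restricted x (Or A B) \<longleftrightarrow> pos_weakly_restricted x A \<or> pos_weakly_restricted x B"
  "neg_weakly_restricted x (Or A B) \<longleftrightarrow> neg_weakly_restricted x A \<and> neg_weakly_restricted x B"
  by (auto simp: pos_weakly_restricted_def neg_weakly_restricted_def Let_def)

lemma weakly_restricted_Imp [simp]:
  "pos_weakly_restricted x (Imp A B) \<longleftrightarrow> neg_weakly_restricted x A \<or> pos_weakly_restricted x B"
  "neg_weakly_restricted x (Imp A B) \<longleftrightarrow> pos_weakly_restricted x A \<and> neg_weakly_restricted x B"
  by (auto simp: pos_weakly_restricted_def neg_weakly_restricted_def Let_def)

lemma weakly_restricted_quantifier [simp]: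
  "\<not> pos_weakly_restricted x (All y A)" "\<not> neg_weakly_restricted x (All y A)"
  "\<not> pos_weakly_restricted x (Ex y A)" "\<not> neg_weakly_restricted x (Ex y A)"
  by (simp_all add: pos_weakly_restricted_def neg_weakly_restricted_def)

lemma weakly_restricted_subst_Cst:
  assumes "y \<noteq> x"
  shows "(pos_weakly_restricted y G \<longrightarrow> pos_weakly_restricted y (subst G x (Cst c)))
    \<and> (neg_weakly_restricted y G \<longrightarrow> neg_weakly_restricted y (subst G x (Cst c)))"
proof (induction G)
  case (Atom p ts)
  then show ?case
    using assms by auto
next
  case (Eq s t)
  then show ?case
    using assms by (cases s; cases t) auto
qed auto

lemma derivable_Neg_restricted_atom:
  assumes "is_atomic A" "x \<in> RV A" "consts_form A \<subseteq> set cs" "preds A \<subseteq> preds F" "fv A \<subseteq> W"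
    and "SPP cs F \<subseteq> S" "Neg (in_c cs [Var x]) \<in> S" "finite W"
  shows "derivable S W (Neg A)"
proof -
  have in_dom: "derivable (insert A S) W (in_c cs [Var x])"
  proof (cases A)
    case (Atom p ts)
    have "spp_axiom cs p (length ts) \<in> insert A S"
      using assms(4,6) Atom by (auto simp: SPP_def)
    then have "derivable (insert A S) W (Imp (Atom p ts) (in_c cs ts))"
      using assms(8) by (rule derivable_spp_instance)
    moreover have "derivable (insert A S) W (Atom p ts)"
      using Atom by (simp add: derivable_Assm)
    ultimately have "derivable (insert A S) W (in_c cs ts)"
      by (rule derivable_ImpE)
    moreover have "Var x \<in> set ts"
      using assms(2) Atom by (auto simp: mem_vars_trm_iff)
    then have "in_c cs [Var x] \<in> set (map (\<lambda>t. disj_list (map (\<lambda>c. Eq t (Cst c)) cs)) ts)"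
      by (simp add: in_c_single)
    ultimately show ?thesis
      unfolding in_c_def[of cs ts] by (rule derivable_conj_listD)
  next
    case (Eq s t)
    then obtain c where "c \<in> set cs" "A = Eq (Var x) (Cst c) \<or> A = Eq (Cst c) (Var x)"
      using assms(2,3) by (cases s; cases t) auto
    then have "derivable (insert A S) W (Eq (Var x) (Cst c))"
      using derivable_Assm[of A "insert A S" W] derivable_Eq_sym by auto
    then show ?thesis
      unfolding in_c_single by (rule derivable_disj_listI[rotated]) (use \<open>c \<in> set cs\<close> in auto)
  qed (use assms(1,2) in auto)
  have "derivable (insert A S) W (Neg (in_c cs [Var x]))"
    using assms(7) by (simp add: derivable_Assm)
  then have "derivable (insert A S) W FBot"
    using in_dom by (rule derivable_ImpE)
  then show ?thesis
    using assms(5) by (rule derivable_ImpI)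
qed

lemma derivable_weakly_restricted:
  assumes "consts_form G \<subseteq> set cs" "preds G \<subseteq> preds F" "fv G \<subseteq> W"
    and "SPP cs F \<subseteq> S" "Neg (in_c cs [Var x]) \<in> S" "finite W"
  shows "(pos_weakly_restricted x G \<longrightarrow> derivable S W G)
    \<and> (neg_weakly_restricted x G \<longrightarrow> derivable S W (Neg G))"
  using assms(1-3)
proof (induction G)
  case FBot
  show ?case
    by (simp add: derivable_FTop)
next
  case (Atom p ts)
  then show ?case
    using derivable_Neg_restricted_atom[of "Atom p ts" x cs F W S] assms(4-6) by simp
next
  case (Eq s t)
  then show ?case
    using derivable_Neg_restricted_atom[of "Eq s t" x cs F W S] assms(4-6) by simp
next
  case (And A B)
  then show ?case
    using derivable_AndI[of S W A B] derivable_Neg_AndI1[of S W A B] derivable_Neg_AndI2[of S W B A]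
    by auto
next
  case (Or A B)
  then show ?case
    using derivable_OrI1[of S W A B] derivable_OrI2[of S W B A] derivable_Neg_OrI[of S W A B]
    by auto
next
  case (Imp A B)
  then show ?case
    using derivable_Imp_constI[of S W B A] derivable_Imp_NegI[of S W A B]
      derivable_Neg_ImpI[of S W A B]
    by auto
qed simp_all

section \<open>Pruning safely restricted subformulas\<close>

text \<open>Q is the kind of the quantifier binding y (True for universal) and \<pi> the polarity of the
  occurrence (True for positive), so that safe_matrix asks for exactly these subformulas.\<close>
definition safely_restricted :: "nat \<Rightarrow> bool \<Rightarrow> bool \<Rightarrow> ('c, 'p) form \<Rightarrow> bool" where
  "safely_restricted y Q \<pi> G \<longleftrightarrow>
     (pos_weakly_restricted y G \<and> \<pi> = Q) \<or> (neg_weakly_restricted y G \<and> \<pi> \<noteq> Q)"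

text \<open>Here \<pi> is the polarity of G itself, so the subformula at position q has polarity
  even (ante_count G q) = \<pi>.\<close>
definition covered :: "nat \<Rightarrow> bool \<Rightarrow> bool \<Rightarrow> ('c, 'p) form \<Rightarrow> bool" where
  "covered y Q \<pi> G \<longleftrightarrow> (\<forall>p A. subf_at G p = Some A \<and> is_atomic A \<and> y \<in> fv A \<longrightarrow>
     (\<exists>q r H. p = q @ r \<and> subf_at G q = Some H
        \<and> safely_restricted y Q (even (ante_count G q) = \<pi>) H))"

text \<open>Replace every maximal safely restricted subformula by the truth value it takes once y is
  known to lie outside the domain.\<close>
fun prune :: "nat \<Rightarrow> bool \<Rightarrow> bool \<Rightarrow> ('c, 'p) form \<Rightarrow> ('c, 'p) form" where
  "prune y Q \<pi> (And A B) = (if safely_restricted y Q \<pi> (And A B) then truth (\<pi> = Q)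
      else And (prune y Q \<pi> A) (prune y Q \<pi> B))"
| "prune y Q \<pi> (Or A B) = (if safely_restricted y Q \<pi> (Or A B) then truth (\<pi> = Q)
      else Or (prune y Q \<pi> A) (prune y Q \<pi> B))"
| "prune y Q \<pi> (Imp A B) = (if safely_restricted y Q \<pi> (Imp A B) then truth (\<pi> = Q)
      else Imp (prune y Q (\<not> \<pi>) A) (prune y Q \<pi> B))"
| "prune y Q \<pi> G = (if safely_restricted y Q \<pi> G then truth (\<pi> = Q) else G)"

lemma fv_prune: "fv (prune y Q \<pi> G) \<subseteq> fv G"
  by (induction y Q \<pi> G rule: prune.induct) auto

lemma covered_subformula:
  assumes "covered y Q \<pi> G" "\<not> safely_restricted y Q \<pi> G"
    and "\<And>p. subf_at G (i # p) = subf_at C p"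
    and "\<And>p. ante_count G (i # p) = (if ante then Suc (ante_count C p) else ante_count C p)"
  shows "covered y Q (\<pi> \<noteq> ante) C"
  unfolding covered_def
proof (intro allI impI)
  fix p A assume "subf_at C p = Some A \<and> is_atomic A \<and> y \<in> fv A"
  then obtain q r H where qr: "i # p = q @ r" "subf_at G q = Some H"
      "safely_restricted y Q (even (ante_count G q) = \<pi>) H"
    using assms(1,3) unfolding covered_def by (metis (no_types, lifting))
  then obtain q' where q: "q = i # q'"
    using assms(2) by (cases q) auto
  have "p = q' @ r" "subf_at C q' = Some H"
    using qr q assms(3) by auto
  moreover have "(even (ante_count G q) = \<pi>) = (even (ante_count C q') = (\<pi> \<noteq> ante))"
    using assms(4)[of q'] q by (cases ante) auto
  ultimately show "\<exists>q r H. p = q @ r \<and> subf_at C q = Some H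
      \<and> safely_restricted y Q (even (ante_count C q) = (\<pi> \<noteq> ante)) H"
    using qr(3) by auto
qed

lemma covered_And:
  "covered y Q \<pi> (And A B) \<Longrightarrow> \<not> safely_restricted y Q \<pi> (And A B)
   \<Longrightarrow> covered y Q \<pi> A \<and> covered y Q \<pi> B"
  using covered_subformula[of y Q \<pi> "And A B" 0 A False]
    covered_subformula[of y Q \<pi> "And A B" 1 B False] by simp

lemma covered_Or:
  "covered y Q \<pi> (Or A B) \<Longrightarrow> \<not> safely_restricted y Q \<pi> (Or A B)
   \<Longrightarrow> covered y Q \<pi> A \<and> covered y Q \<pi> B"
  using covered_subformula[of y Q \<pi> "Or A B" 0 A False]
    covered_subformula[of y Q \<pi> "Or A B" 1 B False] by simp

lemma covered_Imp:
  "covered y Q \<pi> (Imp A B) \<Longrightarrow> \<not> safely_restricted y Q \<pi> (Imp A B)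
   \<Longrightarrow> covered y Q (\<not> \<pi>) A \<and> covered y Q \<pi> B"
  using covered_subformula[of y Q \<pi> "Imp A B" 0 A True]
    covered_subformula[of y Q \<pi> "Imp A B" 1 B False] by simp

lemma covered_atom:
  "covered y Q \<pi> G \<Longrightarrow> \<not> safely_restricted y Q \<pi> G \<Longrightarrow> is_atomic G \<Longrightarrow> y \<notin> fv G"
  unfolding covered_def by (auto dest!: spec[of _ "[]"])

lemma fv_prune_covered: "qfree G \<Longrightarrow> covered y Q \<pi> G \<Longrightarrow> y \<notin> fv (prune y Q \<pi> G)"
proof (induction G arbitrary: \<pi>)
  case (And A B)
  then show ?case
    using covered_And[of y Q \<pi> A B] by auto
next
  case (Or A B)
  then show ?case
    using covered_Or[of y Q \<pi> A B] by auto
next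
  case (Imp A B)
  then show ?case
    using covered_Imp[of y Q \<pi> A B] by auto
qed (auto dest: covered_atom)

lemma covered_subst_Cst:
  assumes "covered y Q \<pi> M" "qfree M" "y \<noteq> x"
  shows "covered y Q \<pi> (subst M x (Cst c))"
  unfolding covered_def
proof (intro allI impI)
  fix p A' assume A': "subf_at (subst M x (Cst c)) p = Some A' \<and> is_atomic A' \<and> y \<in> fv A'"
  then obtain A where A: "subf_at M p = Some A" "A' = subst A x (Cst c)"
    using subf_at_subst[OF assms(2)] by auto
  then obtain q r H where qr: "p = q @ r" "subf_at M q = Some H"
      "safely_restricted y Q (even (ante_count M q) = \<pi>) H"
    using assms(1) A' unfolding covered_def by auto
  then have "safely_restricted y Q (even (ante_count M q) = \<pi>) (subst H x (Cst c))"
    using weakly_restricted_subst_Cst[OF assms(3), of H c] unfolding safely_restricted_def by auto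
  with qr show "\<exists>q r H. p = q @ r \<and> subf_at (subst M x (Cst c)) q = Some H
      \<and> safely_restricted y Q (even (ante_count (subst M x (Cst c)) q) = \<pi>) H"
    by (auto simp: subf_at_subst[OF assms(2)])
qed

lemma safe_matrix_covered:
  assumes "safe_matrix qs M" "(Q, y) \<in> set qs"
  shows "covered y Q True M"
  unfolding covered_def
proof (intro allI impI)
  fix p A assume "subf_at M p = Some A \<and> is_atomic A \<and> y \<in> fv A"
  then obtain q r G where qr: "p = q @ r" "subf_at M q = Some G"
    "if Q then (even (ante_count M q) \<and> pos_weakly_restricted y G)
            \<or> (odd (ante_count M q) \<and> neg_weakly_restricted y G)
          else (odd (ante_count M q) \<and> pos_weakly_restricted y G)
            \<or> (even (ante_count M q) \<and> neg_weakly_restricted y G)"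
    using bspec[OF assms(1)[unfolded safe_matrix_def] assms(2)] by auto
  then have "safely_restricted y Q (even (ante_count M q) = True) G"
    unfolding safely_restricted_def by (cases Q) auto
  with qr(1,2) show "\<exists>q r H. p = q @ r \<and> subf_at M q = Some H
      \<and> safely_restricted y Q (even (ante_count M q) = True) H"
    by blast
qed

lemma derivable_safely_restricted_iff:
  assumes "safely_restricted y Q \<pi> G"
    and "consts_form G \<subseteq> set cs" "preds G \<subseteq> preds F" "fv G \<subseteq> W"
    and "SPP cs F \<subseteq> S" "Neg (in_c cs [Var y]) \<in> S" "finite W"
  shows "derivable S W (Iff G (truth (\<pi> = Q)))"
proof -
  have "derivable S W (imp_dir (\<pi> = Q) G (truth (\<pi> = Q)))"
    using assms(4) by (rule derivable_imp_dir_truth)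
  moreover have "derivable S W (imp_dir (\<pi> \<noteq> Q) G (truth (\<pi> = Q)))"
    using assms(1) derivable_weakly_restricted[OF assms(2-7)]
    unfolding safely_restricted_def imp_dir_def by (auto intro: derivable_Imp_constI)
  ultimately show ?thesis
    by (rule derivable_IffI_imp_dir)
qed

lemma derivable_prune_iff:
  assumes "consts_form G \<subseteq> set cs" "preds G \<subseteq> preds F" "fv G \<subseteq> W"
    and "SPP cs F \<subseteq> S" "Neg (in_c cs [Var y]) \<in> S" "finite W"
  shows "derivable S W (Iff G (prune y Q \<pi> G))"
proof -
  have leaf: "derivable S W (Iff G' (prune y Q \<pi> G'))"
    if "prune y Q \<pi> G' = (if safely_restricted y Q \<pi> G' then truth (\<pi> = Q) else G')"
      and "consts_form G' \<subseteq> set cs" "preds G' \<subseteq> preds F" "fv G' \<subseteq> W" for G' \<pi>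
    using that derivable_safely_restricted_iff[OF _ that(2-4) assms(4-6)] derivable_Iff_refl[OF that(4)]
    by (cases "safely_restricted y Q \<pi> G'") simp_all
  show ?thesis
    using assms(1-3)
  proof (induction G arbitrary: \<pi>)
    case (And A B)
    then have "derivable S W (imp_dir d (And A B) (And (prune y Q \<pi> A) (prune y Q \<pi> B)))" for d
      using fv_prune[of y Q \<pi> A] fv_prune[of y Q \<pi> B]
      by (intro derivable_imp_dir_And) (auto simp: derivable_Iff_iff_imp_dir)
    then show ?case
      using derivable_safely_restricted_iff[OF _ And.prems assms(4-6)]
      by (auto simp: derivable_Iff_iff_imp_dir)
  next
    case (Or A B)
    then have "derivable S W (imp_dir d (Or A B) (Or (prune y Q \<pi> A) (prune y Q \<pi> B)))" for d
      using fv_prune[of y Q \<pi> A] fv_prune[of y Q \<pi> B]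
      by (intro derivable_imp_dir_Or) (auto simp: derivable_Iff_iff_imp_dir)
    then show ?case
      using derivable_safely_restricted_iff[OF _ Or.prems assms(4-6)]
      by (auto simp: derivable_Iff_iff_imp_dir)
  next
    case (Imp A B)
    then have "derivable S W (imp_dir d (Imp A B) (Imp (prune y Q (\<not> \<pi>) A) (prune y Q \<pi> B)))" for d
      using fv_prune[of y Q "\<not> \<pi>" A] fv_prune[of y Q \<pi> B]
      by (intro derivable_imp_dir_Imp) (auto simp: derivable_Iff_iff_imp_dir)
    then show ?case
      using derivable_safely_restricted_iff[OF _ Imp.prems assms(4-6)]
      by (auto simp: derivable_Iff_iff_imp_dir)
  qed (rule leaf; simp)+
qed

lemma derivable_subst_prune:
  assumes "fv G \<subseteq> W"
  shows "derivable S W (imp_dir (\<pi> = Q) (subst G y (Cst c)) (subst (prune y Q \<pi> G) y (Cst c)))"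
proof -
  have leaf: "derivable S W (imp_dir (\<pi> = Q) (subst G' y (Cst c)) (subst (prune y Q \<pi> G') y (Cst c)))"
    if "prune y Q \<pi> G' = (if safely_restricted y Q \<pi> G' then truth (\<pi> = Q) else G')"
      and "fv G' \<subseteq> W" for G' \<pi>
    using that derivable_imp_dir_truth[of "subst G' y (Cst c)" W S] derivable_imp_dir_refl[of "subst G' y (Cst c)" W S]
    by (cases "safely_restricted y Q \<pi> G'") auto
  show ?thesis
    using assms
  proof (induction G arbitrary: \<pi>)
    case (And A B)
    then have "derivable S W (imp_dir (\<pi> = Q) (subst (And A B) y (Cst c))
        (subst (And (prune y Q \<pi> A) (prune y Q \<pi> B)) y (Cst c)))"
      using fv_prune[of y Q \<pi> A] fv_prune[of y Q \<pi> B]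
      by (simp only: subst.simps, intro derivable_imp_dir_And) auto
    then show ?case
      using derivable_imp_dir_truth[of "subst (And A B) y (Cst c)" W S "\<pi> = Q"] And.prems by auto
  next
    case (Or A B)
    then have "derivable S W (imp_dir (\<pi> = Q) (subst (Or A B) y (Cst c))
        (subst (Or (prune y Q \<pi> A) (prune y Q \<pi> B)) y (Cst c)))"
      using fv_prune[of y Q \<pi> A] fv_prune[of y Q \<pi> B]
      by (simp only: subst.simps, intro derivable_imp_dir_Or) auto
    then show ?case
      using derivable_imp_dir_truth[of "subst (Or A B) y (Cst c)" W S "\<pi> = Q"] Or.prems by auto
  next
    case (Imp A B)
    have "derivable S W (imp_dir (\<not> (\<pi> = Q)) (subst A y (Cst c)) (subst (prune y Q (\<not> \<pi>) A) y (Cst c)))"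
      using Imp.IH(1)[of "\<not> \<pi>"] Imp.prems by (cases \<pi>) simp_all
    with Imp have "derivable S W (imp_dir (\<pi> = Q) (subst (Imp A B) y (Cst c))
        (subst (Imp (prune y Q (\<not> \<pi>) A) (prune y Q \<pi> B)) y (Cst c)))"
      using fv_prune[of y Q "\<not> \<pi>" A] fv_prune[of y Q \<pi> B]
      by (simp only: subst.simps, intro derivable_imp_dir_Imp) auto
    then show ?case
      using derivable_imp_dir_truth[of "subst (Imp A B) y (Cst c)" W S "\<pi> = Q"] Imp.prems by auto
  qed (rule leaf; simp)+
qed

section \<open>The quantifier steps\<close>

lemma derivable_All_mono:
  assumes "derivable S (insert y W) (Imp A B)" "y \<notin> W" "fv A \<subseteq> insert y W"
  shows "derivable S W (Imp (All y A) (All y B))"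
proof (rule derivable_ImpI)
  let ?S = "insert (All y A) S"
  have "derivable ?S (insert y W) (subst A y (Var y))"
    by (rule derivable_AllE) (auto intro: derivable_Assm)
  then have "derivable ?S (insert y W) A"
    by simp
  with derivable_insert[OF assms(1)] have "derivable ?S (insert y W) B"
    by (rule derivable_ImpE)
  then have "derivable ?S W B"
    by (rule derivable_mono) auto
  then show "derivable ?S W (All y B)"
    using assms(2) by (rule derivable_AllI)
qed (use assms(3) in auto)

lemma derivable_Ex_mono:
  assumes "derivable S (insert y W) (Imp A B)" "y \<notin> W" "fv A \<subseteq> insert y W"
  shows "derivable S W (Imp (Ex y A) (Ex y B))"
proof (rule derivable_ImpI)
  let ?S = "insert (Ex y A) S"
  have "derivable (insert A ?S) (insert y W) B"
    by (rule derivable_ImpE[OF derivable_mono[OF assms(1)]]) (auto intro: derivable_Assm)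
  then have "derivable (insert A ?S) (insert y W) (Ex y B)"
    by (intro derivable_ExI[where t = "Var y"]) simp_all
  with derivable_Assm[of "Ex y A" ?S W] show "derivable ?S W (Ex y B)"
    by (rule derivable_ExE[OF _ _ assms(2)]) (use assms(3) in auto)
qed (use assms(3) in auto)

lemma derivable_prenex_mono:
  assumes "derivable S (W \<union> set (map snd qs)) (Imp A B)"
    and "distinct (map snd qs)" "set (map snd qs) \<inter> W = {}" "fv A \<subseteq> W \<union> set (map snd qs)"
  shows "derivable S W (Imp (prenex qs A) (prenex qs B))"
  using assms
proof (induction qs arbitrary: W)
  case (Cons qy qs)
  obtain q y where qy: "qy = (q, y)"
    by fastforce
  have IH: "derivable S (insert y W) (Imp (prenex qs A) (prenex qs B))"
    by (rule Cons.IH) (use Cons.prems qy in auto)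
  have y: "y \<notin> W" and fv: "fv (prenex qs A) \<subseteq> insert y W"
    using Cons.prems(3,4) qy by auto
  show ?case
    using derivable_All_mono[OF IH y fv] derivable_Ex_mono[OF IH y fv] qy by simp
qed simp

lemma derivable_prenex_imp_dir:
  assumes "derivable S (W \<union> set (map snd qs)) (imp_dir d A B)"
    and "distinct (map snd qs)" "set (map snd qs) \<inter> W = {}"
    and "fv A \<subseteq> W \<union> set (map snd qs)" "fv B \<subseteq> W \<union> set (map snd qs)"
  shows "derivable S W (imp_dir d (prenex qs A) (prenex qs B))"
  using assms derivable_prenex_mono[of S W qs] by (cases d) (simp_all add: imp_dir_def)

lemma derivable_All_of_instances:
  fixes P :: "('c, 'p) form"
  assumes "x \<notin> W" "c\<^sub>0 \<in> set cs"
    and inst: "\<And>c. c \<in> set cs \<Longrightarrow> derivable S (insert x W) (subst P x (Cst c))"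
    and escape: "derivable S (insert x W) (Imp (subst P x (Cst c\<^sub>0)) R)"
      "derivable (insert (Neg (in_c cs [Var x])) S) (insert x W) (Iff P R)"
  shows "derivable S W (All x P)"
proof -
  let ?D = "in_c cs [Var x]"
  have "derivable (insert ?D S) (insert x W) P"
  proof (rule derivable_disj_listE[OF derivable_Assm])
    fix A :: "('c, 'p) form"
    assume "A \<in> set (map (\<lambda>c. Eq (Var x) (Cst c)) cs)"
    then obtain c where c: "c \<in> set cs" "A = Eq (Var x) (Cst c)"
      by auto
    have "derivable (insert A (insert ?D S)) (insert x W) (Eq (Cst c) (Var x))"
      by (rule derivable_Eq_sym[OF derivable_Assm]) (simp add: c(2))
    then have "derivable (insert A (insert ?D S)) (insert x W) (subst P x (Var x))"
      by (rule derivable_EqSubst) (auto intro: derivable_mono[OF inst[OF c(1)]])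
    then show "derivable (insert A (insert ?D S)) (insert x W) P"
      by simp
  qed (auto simp: in_c_single)
  moreover have "derivable (insert (Neg ?D) S) (insert x W) P"
  proof -
    have "derivable (insert (Neg ?D) S) (insert x W) R"
      by (rule derivable_ImpE[OF derivable_insert[OF escape(1)] derivable_insert[OF inst[OF assms(2)]]])
    with escape(2) show ?thesis
      by (rule derivable_IffD2)
  qed
  ultimately have "derivable S (insert x W) P"
    by (rule derivable_in_c_cases) simp
  then have "derivable S W P"
    by (rule derivable_mono) auto
  then show ?thesis
    using assms(1) by (rule derivable_AllI)
qed

lemma derivable_ExE_instances:
  fixes P :: "('c, 'p) form"
  assumes "derivable S W (Ex x P)" "x \<notin> W" "fv P \<subseteq> insert x W" "x \<notin> fv C" "c\<^sub>0 \<in> set cs"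
    and inst: "\<And>c. c \<in> set cs \<Longrightarrow> derivable S (insert x W) (Imp (subst P x (Cst c)) C)"
    and escape: "derivable S (insert x W) (Imp R (subst P x (Cst c\<^sub>0)))"
      "derivable (insert (Neg (in_c cs [Var x])) S) (insert x W) (Iff P R)"
  shows "derivable S W C"
proof -
  let ?D = "in_c cs [Var x]"
  have "derivable (insert ?D (insert P S)) (insert x W) C"
  proof (rule derivable_disj_listE[OF derivable_Assm])
    fix A :: "('c, 'p) form"
    assume "A \<in> set (map (\<lambda>c. Eq (Var x) (Cst c)) cs)"
    then obtain c where c: "c \<in> set cs" "A = Eq (Var x) (Cst c)"
      by auto
    let ?S = "insert A (insert ?D (insert P S))"
    have "derivable ?S (insert x W) (subst P x (Cst c))"
      by (rule derivable_EqSubst[where s = "Var x"]) (auto simp: c(2) intro: derivable_Assm)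
    moreover have "derivable ?S (insert x W) (Imp (subst P x (Cst c)) C)"
      by (rule derivable_mono[OF inst[OF c(1)]]) auto
    ultimately show "derivable ?S (insert x W) C"
      by (rule derivable_ImpE[rotated])
  qed (auto simp: in_c_single)
  moreover have "derivable (insert (Neg ?D) (insert P S)) (insert x W) C"
  proof -
    let ?S = "insert (Neg ?D) (insert P S)"
    have "derivable ?S (insert x W) P"
      by (rule derivable_Assm) simp
    moreover have "derivable ?S (insert x W) (Iff P R)"
      by (rule derivable_mono[OF escape(2)]) auto
    moreover have "derivable ?S (insert x W) (Imp R (subst P x (Cst c\<^sub>0)))"
      by (rule derivable_mono[OF escape(1)]) auto
    moreover have "derivable ?S (insert x W) (Imp (subst P x (Cst c\<^sub>0)) C)"
      by (rule derivable_mono[OF inst[OF assms(5)]]) auto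
    ultimately show ?thesis
      by (meson derivable_IffD1 derivable_ImpE)
  qed
  ultimately have "derivable (insert P S) (insert x W) C"
    by (rule derivable_in_c_cases) simp
  with assms(1) show ?thesis
    by (rule derivable_ExE) (use assms(2-4) in auto)
qed

lemma derivable_conj_list_iff_All:
  fixes P :: "('c, 'p) form"
  assumes "x \<notin> W" "fv P \<subseteq> insert x W" "c\<^sub>0 \<in> set cs"
    and inst: "\<And>c. c \<in> set cs \<Longrightarrow> derivable S (insert x W) (Iff (G c) (subst P x (Cst c)))"
    and fv_G: "\<And>c. c \<in> set cs \<Longrightarrow> fv (G c) \<subseteq> W"
    and escape: "derivable S (insert x W) (Imp (subst P x (Cst c\<^sub>0)) R)"
      "derivable (insert (Neg (in_c cs [Var x])) S) (insert x W) (Iff P R)"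
  shows "derivable S W (Iff (conj_list (map G cs)) (All x P))"
proof -
  let ?S = "insert (conj_list (map G cs)) S" and ?T = "insert (All x P) S"
  have "derivable ?S W (All x P)"
  proof (rule derivable_All_of_instances[OF assms(1,3)])
    fix c assume c: "c \<in> set cs"
    have "derivable ?S (insert x W) (G c)"
      using c by (intro derivable_conj_listD[OF derivable_Assm]) auto
    then show "derivable ?S (insert x W) (subst P x (Cst c))"
      by (rule derivable_IffD1[OF derivable_insert[OF inst[OF c]]])
  qed (auto intro: derivable_mono[OF escape(1)] derivable_mono[OF escape(2)])
  moreover have "derivable ?T W (G c)" if "c \<in> set cs" for c
  proof (rule derivable_IffD2[OF derivable_mono[OF inst[OF that]]])
    show "derivable ?T W (subst P x (Cst c))"
      by (rule derivable_AllE) (auto intro: derivable_Assm)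
  qed auto
  then have "derivable ?T W (conj_list (map G cs))"
    by (intro derivable_conj_listI) auto
  moreover have "fv (conj_list (map G cs)) \<subseteq> W"
    using fv_conj_list[of "map G cs"] fv_G by auto
  ultimately show ?thesis
    using assms(2) by (auto intro!: derivable_AndI derivable_ImpI)
qed

lemma derivable_disj_list_iff_Ex:
  fixes P :: "('c, 'p) form"
  assumes "x \<notin> W" "fv P \<subseteq> insert x W" "c\<^sub>0 \<in> set cs"
    and inst: "\<And>c. c \<in> set cs \<Longrightarrow> derivable S (insert x W) (Iff (G c) (subst P x (Cst c)))"
    and fv_G: "\<And>c. c \<in> set cs \<Longrightarrow> fv (G c) \<subseteq> W"
    and escape: "derivable S (insert x W) (Imp R (subst P x (Cst c\<^sub>0)))"
      "derivable (insert (Neg (in_c cs [Var x])) S) (insert x W) (Iff P R)"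
  shows "derivable S W (Iff (disj_list (map G cs)) (Ex x P))"
proof -
  let ?S = "insert (disj_list (map G cs)) S" and ?T = "insert (Ex x P) S"
  have fv_disj: "fv (disj_list (map G cs)) \<subseteq> W"
    using fv_disj_list[of "map G cs"] fv_G by auto
  have "derivable ?S W (Ex x P)"
  proof (rule derivable_disj_listE[OF derivable_Assm])
    fix A assume "A \<in> set (map G cs)"
    then obtain c where c: "c \<in> set cs" "A = G c"
      by auto
    have "derivable (insert A ?S) W (subst P x (Cst c))"
      by (rule derivable_IffD1[OF derivable_mono[OF inst[OF c(1)]]]) (auto simp: c(2) intro: derivable_Assm)
    then show "derivable (insert A ?S) W (Ex x P)"
      by (rule derivable_ExI) simp
  qed (use fv_G in auto)
  moreover have "derivable ?T W (disj_list (map G cs))"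
  proof (rule derivable_ExE_instances[OF derivable_Assm assms(1,2) _ assms(3)])
    fix c assume c: "c \<in> set cs"
    have "derivable (insert (subst P x (Cst c)) ?T) (insert x W) (G c)"
      by (rule derivable_IffD2[OF derivable_mono[OF inst[OF c]]]) (auto intro: derivable_Assm)
    then have "derivable (insert (subst P x (Cst c)) ?T) (insert x W) (disj_list (map G cs))"
      using c by (intro derivable_disj_listI) auto
    then show "derivable ?T (insert x W) (Imp (subst P x (Cst c)) (disj_list (map G cs)))"
      by (rule derivable_ImpI) (use assms(2) in auto)
  qed (use fv_disj assms(1) in \<open>auto intro: derivable_mono[OF escape(1)] derivable_mono[OF escape(2)]\<close>)
  ultimately show ?thesis
    using fv_disj assms(2) by (auto intro!: derivable_AndI derivable_ImpI)
qed

lemma derivable_prenex_prune: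
  assumes "qfree M" "distinct (map snd qs)" "x \<notin> set (map snd qs)"
    and "fv M \<subseteq> insert x (set (map snd qs))" "set (map snd qs) \<inter> W = {}" "finite W"
    and "consts_form M \<subseteq> set cs" "preds M \<subseteq> preds F" "covered x Q True M"
  shows "derivable S (insert x W)
      (imp_dir Q (prenex qs (subst M x (Cst c))) (prenex qs (prune x Q True M)))"
    and "SPP cs F \<subseteq> S \<Longrightarrow> derivable (insert (Neg (in_c cs [Var x])) S) (insert x W)
      (Iff (prenex qs M) (prenex qs (prune x Q True M)))"
proof -
  let ?V = "insert x W \<union> set (map snd qs)" and ?R = "prune x Q True M"
  have qs: "set (map snd qs) \<inter> insert x W = {}"
    using assms(3,5) by auto
  have fv: "fv M \<subseteq> ?V" "fv ?R \<subseteq> ?V" "fv (subst M x (Cst c)) \<subseteq> ?V"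
    using assms(4) fv_prune[of x Q True M] by auto
  have "subst ?R x (Cst c) = ?R"
    using fv_prune_covered[OF assms(1,9)] by (rule subst_trivial)
  then have "derivable S ?V (imp_dir Q (subst M x (Cst c)) ?R)"
    using derivable_subst_prune[OF fv(1), of S True Q x c] by simp
  then show "derivable S (insert x W) (imp_dir Q (prenex qs (subst M x (Cst c))) (prenex qs ?R))"
    using derivable_prenex_imp_dir assms(2) qs fv(2,3) by blast
  assume "SPP cs F \<subseteq> S"
  then have "derivable (insert (Neg (in_c cs [Var x])) S) ?V (imp_dir d M ?R)" for d
    using derivable_prune_iff[OF assms(7,8) fv(1), of "insert (Neg (in_c cs [Var x])) S" x Q True]
      assms(6) by (auto simp: derivable_Iff_iff_imp_dir)
  then show "derivable (insert (Neg (in_c cs [Var x])) S) (insert x W) (Iff (prenex qs M) (prenex qs ?R))"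
    using derivable_prenex_imp_dir[OF _ assms(2) qs fv(1,2)] by (simp add: derivable_Iff_iff_imp_dir)
qed

lemma derivable_ground_prenex_iff:
  assumes "qfree M" "distinct (map snd qs)" "fv M \<subseteq> set (map snd qs)"
    and "set (map snd qs) \<inter> W = {}" "finite W"
    and "consts_form M \<subseteq> set cs" "preds M \<subseteq> preds F" "\<forall>(Q, y) \<in> set qs. covered y Q True M"
    and "cs \<noteq> []"
  shows "derivable (SPP cs F) W (Iff (ground cs (prenex qs M)) (prenex qs M))"
  using assms(1-8)
proof (induction qs arbitrary: M W)
  case Nil
  then show ?case
    by (simp add: ground_qfree derivable_Iff_refl)
next
  case (Cons qx qs)
  obtain Q x where qx: "qx = (Q, x)"
    by fastforce
  let ?P = "prenex qs M" and ?G = "\<lambda>c. ground cs (subst (prenex qs M) x (Cst c))"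
  have x: "x \<notin> set (map snd qs)" "x \<notin> W"
    using Cons.prems(2,4) qx by auto
  have inst: "derivable (SPP cs F) (insert x W) (Iff (?G c) (subst ?P x (Cst c)))"
    if "c \<in> set cs" for c
    unfolding subst_prenex[OF x(1)]
  proof (rule Cons.IH)
    show "consts_form (subst M x (Cst c)) \<subseteq> set cs"
      using consts_subst_Cst[of M x c] Cons.prems(6) that by auto
    show "\<forall>(Q', y) \<in> set qs. covered y Q' True (subst M x (Cst c))"
      using Cons.prems(1,8) x(1) by (force intro: covered_subst_Cst)
  qed (use Cons.prems qx x in auto)
  have fv_G: "fv (?G c) \<subseteq> W" for c
    using fv_ground[of cs "subst ?P x (Cst c)"] Cons.prems(3) qx by auto
  have fv_P: "fv ?P \<subseteq> insert x W"
    using Cons.prems(3) qx by auto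
  let ?R = "prenex qs (prune x Q True M)"
  have escape: "derivable (SPP cs F) (insert x W) (imp_dir Q (subst ?P x (Cst (hd cs))) ?R)"
      "derivable (insert (Neg (in_c cs [Var x])) (SPP cs F)) (insert x W) (Iff ?P ?R)"
    using derivable_prenex_prune[where M = M and qs = qs and x = x and W = W and Q = Q
        and S = "SPP cs F"] Cons.prems qx x
    by (auto simp: subst_prenex[OF x(1)])
  show ?case
  proof (cases Q)
    case True
    then show ?thesis
      using derivable_conj_list_iff_All[OF x(2) fv_P hd_in_set[OF assms(9)] inst fv_G _ escape(2)]
        escape(1) qx
      by (simp add: imp_dir_def)
  next
    case False
    then show ?thesis
      using derivable_disj_list_iff_Ex[OF x(2) fv_P hd_in_set[OF assms(9)] inst fv_G _ escape(2)]
        escape(1) qx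
      by (simp add: imp_dir_def)
  qed
qed

theorem proposition2:
  fixes F :: "('c, 'p) form" and cs :: "'c list"
  assumes "safe F"
    and "cs \<noteq> []"
    and "consts_form F \<subseteq> set cs"
  shows "SPP cs F \<turnstile>\<^sub>D\<^sub>E Iff (ground cs F) F"
proof -
  obtain qs M where F: "F = prenex qs M" "qfree M" "distinct (map snd qs)" "sentence F"
      "safe_matrix qs M"
    using assms(1) unfolding safe_def by blast
  have "derivable (SPP cs F) {} (Iff (ground cs F) F)"
    unfolding F(1)
    by (rule derivable_ground_prenex_iff)
      (use F assms(2,3) in \<open>auto simp: sentence_def intro: safe_matrix_covered\<close>)
  then show ?thesis
    by (rule derivableD) (auto simp: SPP_def fv_spp_axiom)
qed

end
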